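(* If $G$ is a finite nonabelian group, then $K(G)\le G'$.
   Context: For $\chi\in\mathrm{Irr}(G)$, the center of $\chi$ is $Z(\chi)=\{g\in G : |\chi(g)|=\chi(1)\}$. For a nonabelian group $G$, let $\mathcal{X}=\{\chi\in\mathrm{Irr}(G) : Z(\chi)>Z(G)\}$ (strict containment) and define $K(G)=\bigcap_{\chi\in\mathcal{X}}\ker(\chi)$. *)

theory Defs
  imports "HOL-Algebra.Generated_Groups" "Jordan_Normal_Form.Matrix"
begin

definition grp_center :: "('a, 'b) monoid_scheme \<Rightarrow> 'a set" where
  "grp_center G = {z \<in> carrier G. \<forall>g \<in> carrier G. z \<otimes>\<^bsub>G\<^esub> g = g \<otimes>\<^bsub>G\<^esub> z}"

definition is_rep :: "('a, 'b) monoid_scheme \<Rightarrow> nat \<Rightarrow> ('a \<Rightarrow> complex mat) \<Rightarrow> bool" where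
  "is_rep G n \<rho> \<longleftrightarrow>
     (\<forall>g \<in> carrier G. \<rho> g \<in> carrier_mat n n) \<and>
     \<rho> \<one>\<^bsub>G\<^esub> = 1\<^sub>m n \<and>
     (\<forall>g \<in> carrier G. \<forall>h \<in> carrier G. \<rho> (g \<otimes>\<^bsub>G\<^esub> h) = \<rho> g * \<rho> h)"

definition invariant_subspace :: "('a, 'b) monoid_scheme \<Rightarrow> nat \<Rightarrow> ('a \<Rightarrow> complex mat) \<Rightarrow> complex vec set \<Rightarrow> bool" where
  "invariant_subspace G n \<rho> W \<longleftrightarrow>
     W \<subseteq> carrier_vec n \<and> 0\<^sub>v n \<in> W \<and>
     (\<forall>v \<in> W. \<forall>w \<in> W. v + w \<in> W) \<and>
     (\<forall>c. \<forall>v \<in> W. c \<cdot>\<^sub>v v \<in> W) \<and>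
     (\<forall>g \<in> carrier G. \<forall>v \<in> W. \<rho> g *\<^sub>v v \<in> W)"

definition irreducible_rep :: "('a, 'b) monoid_scheme \<Rightarrow> nat \<Rightarrow> ('a \<Rightarrow> complex mat) \<Rightarrow> bool" where
  "irreducible_rep G n \<rho> \<longleftrightarrow> is_rep G n \<rho> \<and> n > 0 \<and>
     (\<forall>W. invariant_subspace G n \<rho> W \<longrightarrow> W = {0\<^sub>v n} \<or> W = carrier_vec n)"

definition mat_trace :: "complex mat \<Rightarrow> complex" where
  "mat_trace A = (\<Sum>i<dim_row A. A $$ (i, i))"

definition Irr :: "('a, 'b) monoid_scheme \<Rightarrow> ('a \<Rightarrow> complex) set" where
  "Irr G = {\<chi>. \<exists>n \<rho>. irreducible_rep G n \<rho> \<and>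
              \<chi> = (\<lambda>g. if g \<in> carrier G then mat_trace (\<rho> g) else 0)}"

definition char_center :: "('a, 'b) monoid_scheme \<Rightarrow> ('a \<Rightarrow> complex) \<Rightarrow> 'a set" where
  "char_center G \<chi> = {g \<in> carrier G. cmod (\<chi> g) = cmod (\<chi> \<one>\<^bsub>G\<^esub>)}"

definition char_ker :: "('a, 'b) monoid_scheme \<Rightarrow> ('a \<Rightarrow> complex) \<Rightarrow> 'a set" where
  "char_ker G \<chi> = {g \<in> carrier G. \<chi> g = \<chi> \<one>\<^bsub>G\<^esub>}"

text \<open>K(G): intersection of kernels of irreducible characters chi with Z(chi) > Z(G)
  (an empty intersection is read as G).\<close>
definition K_grp :: "('a, 'b) monoid_scheme \<Rightarrow> 'a set" where
  "K_grp G = carrier G \<inter> (\<Inter>\<chi> \<in> {\<chi> \<in> Irr G. grp_center G \<subset> char_center G \<chi>}. char_ker G \<chi>)"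

end

theory Submission
  imports Defs "HOL-Algebra.Multiplicative_Group"
begin

(* A linear character lambda of G (a homomorphism into the nonzero complex numbers) is an
  irreducible character of degree one with |lambda| = 1 everywhere, so Z(lambda) = G, which
  strictly contains Z(G) because G is nonabelian. Hence K(G) lies in the kernel of every linear
  character. The linear characters of G are those of the finite abelian group G/G', and these
  separate points: a character chi of a subgroup H extends to H<b> by sending b to an m-th root
  of chi(b^m), m being the order of Hb in G/H, and extending step by step reaches the whole
  group. So the linear characters have common kernel G'. *)

definition subgroup_character :: "('a, 'b) monoid_scheme \<Rightarrow> 'a set \<Rightarrow> ('a \<Rightarrow> complex) \<Rightarrow> bool" where
  "subgroup_character G H \<chi> \<longleftrightarrow> subgroup H G \<and> \<chi> \<one>\<^bsub>G\<^esub> = 1 \<and>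
     (\<forall>x \<in> H. \<forall>y \<in> H. \<chi> (x \<otimes>\<^bsub>G\<^esub> y) = \<chi> x * \<chi> y)"

lemma subgroup_character_subgroup: "subgroup_character G H \<chi> \<Longrightarrow> subgroup H G"
  by (simp add: subgroup_character_def)

lemma subgroup_character_one: "subgroup_character G H \<chi> \<Longrightarrow> \<chi> \<one>\<^bsub>G\<^esub> = 1"
  by (simp add: subgroup_character_def)

lemma complex_nth_root_exists:
  fixes z :: complex
  assumes "0 < n"
  obtains w where "w ^ n = z"
proof
  have "rcis (root n (cmod z)) (Arg z / n) ^ n = rcis (root n (cmod z) ^ n) (n * (Arg z / n))"
    by (rule DeMoivre2)
  also have "\<dots> = z"
    using assms by (simp add: rcis_cmod_Arg)
  finally show "rcis (root n (cmod z)) (Arg z / n) ^ n = z" .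
qed

lemma cis_two_pi_div_neq_1:
  assumes "1 < m"
  shows "cis (2 * pi / real m) \<noteq> 1"
proof
  assume "cis (2 * pi / real m) = 1"
  then have "cos (2 * pi / real m) = 1"
    by (metis cis.sel(1) one_complex.sel(1))
  then obtain n :: int where "2 * pi / real m = of_int n * 2 * pi"
    using cos_one_2pi_int by blast
  then have "(2 * pi) * (1 / real m) = (2 * pi) * of_int n"
    by simp
  then have "1 / real m = of_int n"
    by (simp only: mult_cancel_left) simp
  moreover have "0 < 1 / real m" "1 / real m < 1"
    using assms by auto
  ultimately show False
    by simp
qed

context group
begin

lemma character_mult:
  "subgroup_character G H \<chi> \<Longrightarrow> x \<in> H \<Longrightarrow> y \<in> H \<Longrightarrow> \<chi> (x \<otimes> y) = \<chi> x * \<chi> y"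
  unfolding subgroup_character_def by blast

lemma character_mult_inv:
  assumes \<chi>: "subgroup_character G H \<chi>" and x: "x \<in> H"
  shows "\<chi> x * \<chi> (inv x) = 1"
proof -
  have H: "subgroup H G"
    using \<chi> by (rule subgroup_character_subgroup)
  have "x \<otimes> inv x = \<one>"
    using subgroup.mem_carrier[OF H x] by simp
  then show ?thesis
    using character_mult[OF \<chi> x subgroup.m_inv_closed[OF H x]] subgroup_character_one[OF \<chi>] by simp
qed

lemma character_inv:
  "subgroup_character G H \<chi> \<Longrightarrow> x \<in> H \<Longrightarrow> \<chi> (inv x) = inverse (\<chi> x)"
  by (rule inverse_unique[symmetric]) (rule character_mult_inv)

lemma character_nonzero:
  "subgroup_character G H \<chi> \<Longrightarrow> x \<in> H \<Longrightarrow> \<chi> x \<noteq> 0"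
  using character_mult_inv[of H \<chi> x] by auto

lemma character_nat_pow:
  assumes \<chi>: "subgroup_character G H \<chi>" and x: "x \<in> H"
  shows "\<chi> (x [^] (n::nat)) = \<chi> x ^ n"
proof (induction n)
  case 0
  then show ?case
    using subgroup_character_one[OF \<chi>] by simp
next
  case (Suc n)
  have "x [^] n \<in> H"
    using subgroup_int_pow_closed[OF subgroup_character_subgroup[OF \<chi>] x, of "int n"]
    by (simp add: int_pow_int)
  then show ?case
    using Suc character_mult[OF \<chi> _ x] by (simp add: nat_pow_Suc)
qed

lemma character_int_pow:
  assumes \<chi>: "subgroup_character G H \<chi>" and x: "x \<in> H"
  shows "\<chi> (x [^] (i::int)) = \<chi> x powi i"
proof -
  have H: "subgroup H G"
    using \<chi> by (rule subgroup_character_subgroup)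
  then have xG: "x \<in> carrier G"
    using x by (rule subgroup.mem_carrier)
  show ?thesis
  proof (cases i rule: int_cases2)
    case (nonneg n)
    then show ?thesis
      using character_nat_pow[OF \<chi> x] by (simp add: int_pow_int)
  next
    case (nonpos n)
    have "x [^] n \<in> H"
      using subgroup_int_pow_closed[OF H x, of "int n"] by (simp add: int_pow_int)
    have "\<chi> (x [^] i) = \<chi> (inv (x [^] n))"
      by (simp only: nonpos int_pow_neg_int[OF xG])
    also have "\<dots> = inverse (\<chi> x ^ n)"
      by (simp only: character_inv[OF \<chi> \<open>x [^] n \<in> H\<close>] character_nat_pow[OF \<chi> x])
    also have "\<dots> = \<chi> x powi i"
      by (simp only: nonpos power_int_minus power_int_of_nat)
    finally show ?thesis .
  qed
qed

lemma character_norm_eq_1: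
  assumes "finite (carrier G)" and \<chi>: "subgroup_character G H \<chi>" and x: "x \<in> H"
  shows "cmod (\<chi> x) = 1"
proof -
  have "x \<in> carrier G"
    using subgroup_character_subgroup[OF \<chi>] x by (rule subgroup.mem_carrier)
  then have "0 < ord x" and "x [^] ord x = \<one>"
    using ord_ge_1[OF assms(1)] by (auto simp: Suc_le_eq)
  then have "\<chi> x ^ ord x = 1"
    using character_nat_pow[OF \<chi> x, of "ord x", symmetric] subgroup_character_one[OF \<chi>] by simp
  then have "cmod (\<chi> x) ^ ord x = 1 ^ ord x"
    by (simp flip: norm_power)
  then show ?thesis
    by (rule power_eq_imp_eq_base[OF _ norm_ge_zero zero_le_one \<open>0 < ord x\<close>])
qed

end

lemma (in group_hom) character_comp:
  assumes "subgroup_character H (carrier H) \<chi>"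
  shows "subgroup_character G (carrier G) (\<chi> \<circ> h)"
  using assms unfolding subgroup_character_def
  by (simp add: G.subgroup_self)

lemma (in normal) int_pow_mem_iff_ord_dvd:
  assumes b: "b \<in> carrier G"
  shows "b [^] (i::int) \<in> H \<longleftrightarrow> int (group.ord (G Mod H) (H #> b)) dvd i"
proof -
  have Q: "group (G Mod H)"
    by (rule factorgroup_is_group)
  have "b [^] i \<in> H \<longleftrightarrow> H #> b [^] i = H"
    using coset_join1[OF _ int_pow_closed[OF b] subgroup_axioms] rcos_const[OF is_group] by blast
  also have "\<dots> \<longleftrightarrow> (H #> b) [^]\<^bsub>G Mod H\<^esub> i = \<one>\<^bsub>G Mod H\<^esub>"
    using hom_int_pow[OF r_coset_hom_Mod b is_group Q] by simp
  also have "\<dots> \<longleftrightarrow> int (group.ord (G Mod H) (H #> b)) dvd i"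
    using b by (intro group.int_pow_eq_id[OF Q]) (simp add: carrier_FactGroup)
  finally show ?thesis .
qed

(* On H<b> this is h b^k |-> chi h * omega^k; which representation of an element SOME picks
  is irrelevant once omega is compatible with chi on the powers of b that lie in H. *)
definition extend_character ::
    "('a, 'b) monoid_scheme \<Rightarrow> 'a set \<Rightarrow> ('a \<Rightarrow> complex) \<Rightarrow> 'a \<Rightarrow> complex \<Rightarrow> 'a \<Rightarrow> complex" where
  "extend_character G H \<chi> b \<omega> x =
     (SOME c. \<exists>h \<in> H. \<exists>k::int. x = h \<otimes>\<^bsub>G\<^esub> b [^]\<^bsub>G\<^esub> k \<and> c = \<chi> h * \<omega> powi k)"

context group
begin

lemma character_extension_well_defined:
  assumes \<chi>: "subgroup_character G H \<chi>" and b: "b \<in> carrier G" and \<omega>: "\<omega> \<noteq> 0"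
    and compatible: "\<And>i::int. b [^] i \<in> H \<Longrightarrow> \<chi> (b [^] i) = \<omega> powi i"
    and h: "h \<in> H" "h' \<in> H" and eq: "h \<otimes> b [^] k = h' \<otimes> b [^] l"
  shows "\<chi> h * \<omega> powi k = \<chi> h' * \<omega> powi l"
proof -
  have H: "subgroup H G"
    using \<chi> by (rule subgroup_character_subgroup)
  have hG: "h \<in> carrier G" "h' \<in> carrier G"
    using subgroup.mem_carrier[OF H] h by auto
  have "h = (h \<otimes> b [^] k) \<otimes> b [^] (- k)"
    using hG b by (simp add: m_assoc int_pow_mult[symmetric])
  also have "\<dots> = h' \<otimes> b [^] (l - k)"
    unfolding eq using hG b by (simp add: m_assoc int_pow_mult[symmetric])
  finally have h_eq: "h = h' \<otimes> b [^] (l - k)" .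
  then have "b [^] (l - k) = inv h' \<otimes> h"
    using hG b by (simp add: m_assoc[symmetric])
  then have "b [^] (l - k) \<in> H"
    using H h by (simp add: subgroup.m_closed subgroup.m_inv_closed)
  then have "\<chi> h = \<chi> h' * \<omega> powi (l - k)"
    using h_eq character_mult[OF \<chi> h(2)] compatible by simp
  then show ?thesis
    using power_int_add[of \<omega> "l - k" k] \<omega> by simp
qed

lemma extend_character_eq:
  assumes \<chi>: "subgroup_character G H \<chi>" and b: "b \<in> carrier G" and \<omega>: "\<omega> \<noteq> 0"
    and compatible: "\<And>i::int. b [^] i \<in> H \<Longrightarrow> \<chi> (b [^] i) = \<omega> powi i"
    and h: "h \<in> H"
  shows "extend_character G H \<chi> b \<omega> (h \<otimes> b [^] k) = \<chi> h * \<omega> powi k"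
proof -
  have "\<exists>c. \<exists>h' \<in> H. \<exists>l::int. h \<otimes> b [^] k = h' \<otimes> b [^] l \<and> c = \<chi> h' * \<omega> powi l"
    using h by blast
  then have "\<exists>h' \<in> H. \<exists>l::int. h \<otimes> b [^] k = h' \<otimes> b [^] l \<and>
      extend_character G H \<chi> b \<omega> (h \<otimes> b [^] k) = \<chi> h' * \<omega> powi l"
    unfolding extend_character_def by (rule someI_ex)
  then obtain h' l where h': "h' \<in> H" and eq: "h \<otimes> b [^] k = h' \<otimes> b [^] l"
    and extended: "extend_character G H \<chi> b \<omega> (h \<otimes> b [^] k) = \<chi> h' * \<omega> powi l"
    by blast
  have "\<chi> h * \<omega> powi k = \<chi> h' * \<omega> powi l"
    using \<chi> b \<omega> compatible h h' eq by (rule character_extension_well_defined)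
  with extended show ?thesis
    by simp
qed

end

context comm_group
begin

lemma subgroup_mult_int_powers:
  assumes H: "subgroup H G" and b: "b \<in> carrier G"
  shows "subgroup {h \<otimes> b [^] (k::int) | h k. h \<in> H} G"
proof (rule subgroupI)
  show "{h \<otimes> b [^] (k::int) | h k. h \<in> H} \<subseteq> carrier G"
    using subgroup.mem_carrier[OF H] b by auto
  show "{h \<otimes> b [^] (k::int) | h k. h \<in> H} \<noteq> {}"
    using subgroup.one_closed[OF H] by blast
next
  fix x assume "x \<in> {h \<otimes> b [^] (k::int) | h k. h \<in> H}"
  then obtain h k where x: "x = h \<otimes> b [^] (k::int)" and h: "h \<in> H"
    by blast
  then have "inv x = inv h \<otimes> b [^] (- k)"
    using subgroup.mem_carrier[OF H h] b by (simp add: inv_mult int_pow_neg)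
  then show "inv x \<in> {h \<otimes> b [^] (k::int) | h k. h \<in> H}"
    using subgroup.m_inv_closed[OF H h] by blast
next
  fix x y
  assume "x \<in> {h \<otimes> b [^] (k::int) | h k. h \<in> H}" "y \<in> {h \<otimes> b [^] (k::int) | h k. h \<in> H}"
  then obtain h k h' l where xy: "x = h \<otimes> b [^] (k::int)" "y = h' \<otimes> b [^] (l::int)"
    and h: "h \<in> H" "h' \<in> H"
    by blast
  then have "x \<otimes> y = (h \<otimes> h') \<otimes> b [^] (k + l)"
    using subgroup.mem_carrier[OF H] b by (simp add: int_pow_mult m_ac)
  then show "x \<otimes> y \<in> {h \<otimes> b [^] (k::int) | h k. h \<in> H}"
    using subgroup.m_closed[OF H h] by blast
qed

lemma subgroup_character_extend_character:
  assumes \<chi>: "subgroup_character G H \<chi>" and b: "b \<in> carrier G" and \<omega>: "\<omega> \<noteq> 0"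
    and compatible: "\<And>i::int. b [^] i \<in> H \<Longrightarrow> \<chi> (b [^] i) = \<omega> powi i"
  shows "subgroup_character G {h \<otimes> b [^] (k::int) | h k. h \<in> H} (extend_character G H \<chi> b \<omega>)"
    (is "subgroup_character G ?H' ?\<chi>'")
  unfolding subgroup_character_def
proof (intro conjI ballI)
  have H: "subgroup H G"
    using \<chi> by (rule subgroup_character_subgroup)
  have \<chi>'_eq: "?\<chi>' (h \<otimes> b [^] k) = \<chi> h * \<omega> powi k" if "h \<in> H" for h k
    using \<chi> b \<omega> compatible that by (rule extend_character_eq)
  show "subgroup ?H' G"
    using H b by (rule subgroup_mult_int_powers)
  show "?\<chi>' \<one> = 1"
    using \<chi>'_eq[OF subgroup.one_closed[OF H], of 0] subgroup_character_one[OF \<chi>] by simp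
  fix x y assume "x \<in> ?H'" "y \<in> ?H'"
  then obtain h k h' l where xy: "x = h \<otimes> b [^] (k::int)" "y = h' \<otimes> b [^] (l::int)"
    and h: "h \<in> H" "h' \<in> H"
    by blast
  then have "x \<otimes> y = (h \<otimes> h') \<otimes> b [^] (k + l)"
    using subgroup.mem_carrier[OF H] b by (simp add: int_pow_mult m_ac)
  then show "?\<chi>' (x \<otimes> y) = ?\<chi>' x * ?\<chi>' y"
    using xy h \<chi>'_eq subgroup.m_closed[OF H h] character_mult[OF \<chi> h] power_int_add[of \<omega> k l] \<omega>
    by simp
qed

lemma character_extend:
  assumes \<chi>: "subgroup_character G H \<chi>" and b: "b \<in> carrier G" and \<omega>: "\<omega> \<noteq> 0"
    and compatible: "\<And>i::int. b [^] i \<in> H \<Longrightarrow> \<chi> (b [^] i) = \<omega> powi i"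
  obtains H' \<chi>' where "subgroup_character G H' \<chi>'" "H \<subseteq> H'" "b \<in> H'"
    "\<And>x. x \<in> H \<Longrightarrow> \<chi>' x = \<chi> x" "\<chi>' b = \<omega>"
proof -
  have H: "subgroup H G"
    using \<chi> by (rule subgroup_character_subgroup)
  define H' where "H' = {h \<otimes> b [^] (k::int) | h k. h \<in> H}"
  define \<chi>' where "\<chi>' = extend_character G H \<chi> b \<omega>"
  have \<chi>'_eq: "\<chi>' (h \<otimes> b [^] k) = \<chi> h * \<omega> powi k" if "h \<in> H" for h k
    unfolding \<chi>'_def using \<chi> b \<omega> compatible that by (rule extend_character_eq)
  have character: "subgroup_character G H' \<chi>'"
    unfolding H'_def \<chi>'_def using \<chi> b \<omega> compatible by (rule subgroup_character_extend_character)
  have H_eq: "x = x \<otimes> b [^] (0::int)" and \<chi>'_on_H: "\<chi>' x = \<chi> x" if "x \<in> H" for x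
    using \<chi>'_eq[OF that, of 0] subgroup.mem_carrier[OF H that] by simp_all
  then have subset: "H \<subseteq> H'"
    unfolding H'_def by blast
  have b_eq: "b = \<one> \<otimes> b [^] (1::int)"
    using b by simp
  then have "b \<in> H'"
    unfolding H'_def using subgroup.one_closed[OF H] by blast
  moreover have "\<chi>' b = \<omega>"
    using \<chi>'_eq[OF subgroup.one_closed[OF H], of 1] subgroup_character_one[OF \<chi>] b_eq by simp
  ultimately show ?thesis
    using that[OF character subset _ \<chi>'_on_H] by simp
qed

lemma compatible_root_exists:
  assumes fin: "finite (carrier G)" and \<chi>: "subgroup_character G H \<chi>" and b: "b \<in> carrier G"
  obtains \<omega> where "\<omega> \<noteq> 0" "\<And>i::int. b [^] i \<in> H \<Longrightarrow> \<chi> (b [^] i) = \<omega> powi i"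
proof -
  have H: "subgroup H G"
    using \<chi> by (rule subgroup_character_subgroup)
  interpret normal H G
    by (rule subgroup_imp_normal[OF H])
  define m where "m = group.ord (G Mod H) (H #> b)"
  have mem_iff: "b [^] i \<in> H \<longleftrightarrow> int m dvd i" for i :: int
    unfolding m_def by (rule int_pow_mem_iff_ord_dvd[OF b])
  have "finite (carrier (G Mod H))" "H #> b \<in> carrier (G Mod H)"
    using fin b by (simp_all add: carrier_FactGroup)
  then have "0 < m"
    unfolding m_def using group.ord_ge_1[OF factorgroup_is_group] by fastforce
  have bm: "b [^] m \<in> H"
    using mem_iff[of "int m"] by (simp add: int_pow_int)
  obtain \<omega> where \<omega>: "\<omega> ^ m = \<chi> (b [^] m)"
    using complex_nth_root_exists[OF \<open>0 < m\<close>] .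
  show ?thesis
  proof
    show "\<omega> \<noteq> 0"
      using \<omega> character_nonzero[OF \<chi> bm] \<open>0 < m\<close> by (auto simp: zero_power)
    fix i :: int
    assume "b [^] i \<in> H"
    then obtain q where i: "i = int m * q"
      using mem_iff by (auto elim: dvdE)
    have "\<chi> (b [^] i) = \<chi> ((b [^] m) [^] q)"
      using b by (simp add: i int_pow_pow int_pow_int[symmetric])
    also have "\<dots> = (\<omega> ^ m) powi q"
      using character_int_pow[OF \<chi> bm] \<omega> by simp
    also have "\<dots> = \<omega> powi i"
      by (simp add: i power_int_mult)
    finally show "\<chi> (b [^] i) = \<omega> powi i" .
  qed
qed

lemma subgroup_character_nontrivial_at:
  assumes fin: "finite (carrier G)" and a: "a \<in> carrier G" "a \<noteq> \<one>"
  obtains H \<chi> where "subgroup_character G H \<chi>" "a \<in> H" "\<chi> a \<noteq> 1"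
proof -
  have "ord a \<noteq> 1"
    using a pow_ord_eq_1[of a] by (metis nat_pow_eone)
  then have "1 < ord a"
    using ord_ge_1[OF fin a(1)] by simp
  define \<omega> where "\<omega> = cis (2 * pi / ord a)"
  have "\<omega> ^ ord a = 1"
    using \<open>1 < ord a\<close> by (simp add: \<omega>_def DeMoivre)
  then have compatible: "1 = \<omega> powi i" if "a [^] i \<in> {\<one>}" for i :: int
    using that int_pow_eq_id[OF a(1)] by (auto elim!: dvdE simp: power_int_mult)
  have "subgroup_character G {\<one>} (\<lambda>_. 1)"
    using triv_subgroup by (simp add: subgroup_character_def)
  moreover have "\<omega> \<noteq> 0"
    by (simp add: \<omega>_def)
  ultimately obtain H \<chi> where "subgroup_character G H \<chi>" "a \<in> H" "\<chi> a = \<omega>"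
    using character_extend[OF _ a(1) _ compatible] by blast
  moreover have "\<omega> \<noteq> 1"
    unfolding \<omega>_def using \<open>1 < ord a\<close> by (rule cis_two_pi_div_neq_1)
  ultimately show ?thesis
    using that by simp
qed

lemma character_extends_to_carrier:
  assumes fin: "finite (carrier G)"
  shows "subgroup_character G H \<chi> \<Longrightarrow>
    \<exists>\<chi>'. subgroup_character G (carrier G) \<chi>' \<and> (\<forall>x \<in> H. \<chi>' x = \<chi> x)"
proof (induction "card (carrier G) - card H" arbitrary: H \<chi> rule: less_induct)
  case less
  have H: "subgroup H G"
    using less.prems by (rule subgroup_character_subgroup)
  show ?case
  proof (cases "H = carrier G")
    case True
    then show ?thesis
      using less.prems by blast
  next
    case False
    then obtain b where b: "b \<in> carrier G" "b \<notin> H"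
      using subgroup.subset[OF H] by blast
    obtain \<omega> where \<omega>: "\<omega> \<noteq> 0" and compatible: "\<And>i::int. b [^] i \<in> H \<Longrightarrow> \<chi> (b [^] i) = \<omega> powi i"
      using compatible_root_exists[OF fin less.prems b(1)] by blast
    obtain H' \<chi>' where ext: "subgroup_character G H' \<chi>'" "H \<subseteq> H'" "b \<in> H'"
      "\<And>x. x \<in> H \<Longrightarrow> \<chi>' x = \<chi> x"
      using character_extend[OF less.prems b(1) \<omega> compatible] by blast
    have H'_subset: "H' \<subseteq> carrier G"
      using subgroup_character_subgroup[OF ext(1)] by (rule subgroup.subset)
    have "card H < card H'"
    proof (rule psubset_card_mono)
      show "finite H'"
        using H'_subset fin by (rule finite_subset)
      show "H \<subset> H'"
        using ext(2,3) b(2) by blast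
    qed
    moreover have "card H' \<le> card (carrier G)"
      using fin H'_subset by (rule card_mono)
    ultimately have "card (carrier G) - card H' < card (carrier G) - card H"
      by linarith
    then obtain \<chi>'' where \<chi>'': "subgroup_character G (carrier G) \<chi>''" "\<forall>x \<in> H'. \<chi>'' x = \<chi>' x"
      using less.hyps[OF _ ext(1)] by blast
    have "\<chi>'' x = \<chi> x" if "x \<in> H" for x
      using that \<chi>''(2) ext(2,4) by auto
    with \<chi>''(1) show ?thesis
      by blast
  qed
qed

lemma separating_character_exists:
  assumes fin: "finite (carrier G)" and a: "a \<in> carrier G" "a \<noteq> \<one>"
  obtains \<chi> where "subgroup_character G (carrier G) \<chi>" "\<chi> a \<noteq> 1"
proof -
  obtain H \<chi> where \<chi>: "subgroup_character G H \<chi>" "a \<in> H" "\<chi> a \<noteq> 1"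
    using subgroup_character_nontrivial_at[OF fin a] .
  then obtain \<chi>' where "subgroup_character G (carrier G) \<chi>'" "\<chi>' a = \<chi> a"
    using character_extends_to_carrier[OF fin] by blast
  then show ?thesis
    using that \<chi>(3) by simp
qed

end

lemma vec_dim_one_subspace_cases:
  fixes W :: "'a::field vec set"
  assumes W: "W \<subseteq> carrier_vec 1" "0\<^sub>v 1 \<in> W" and smult: "\<And>c v. v \<in> W \<Longrightarrow> c \<cdot>\<^sub>v v \<in> W"
  shows "W = {0\<^sub>v 1} \<or> W = carrier_vec 1"
proof (cases "W \<subseteq> {0\<^sub>v 1}")
  case True
  then show ?thesis
    using W by blast
next
  case False
  then obtain v where v: "v \<in> W" "v \<noteq> 0\<^sub>v 1"
    by blast
  have "v $ 0 \<noteq> 0"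
  proof
    assume "v $ 0 = 0"
    then have "v = 0\<^sub>v 1"
      using v W(1) by (intro eq_vecI) auto
    with v(2) show False
      by simp
  qed
  then have "u = (u $ 0 / v $ 0) \<cdot>\<^sub>v v" if "u \<in> carrier_vec 1" for u
    using that v W(1) by (intro eq_vecI) auto
  then have "carrier_vec 1 \<subseteq> W"
    using smult[OF v(1)] by (metis subsetI)
  then show ?thesis
    using W(1) by blast
qed

lemma is_rep_dim_one_irreducible: "is_rep G 1 \<rho> \<Longrightarrow> irreducible_rep G 1 \<rho>"
  unfolding irreducible_rep_def invariant_subspace_def using vec_dim_one_subspace_cases by blast

context group
begin

lemma linear_character_in_Irr:
  assumes \<chi>: "subgroup_character G (carrier G) \<chi>"
  shows "(\<lambda>g. if g \<in> carrier G then \<chi> g else 0) \<in> Irr G"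
proof -
  define \<rho> where "\<rho> g = mat 1 1 (\<lambda>_. \<chi> g)" for g
  have rep: "is_rep G 1 \<rho>"
    unfolding is_rep_def
  proof (intro conjI ballI)
    show "\<rho> g \<in> carrier_mat 1 1" for g
      by (simp add: \<rho>_def)
    show "\<rho> \<one> = 1\<^sub>m 1"
      using \<chi> by (intro eq_matI) (auto simp: \<rho>_def subgroup_character_def)
    show "\<rho> (x \<otimes> y) = \<rho> x * \<rho> y" if "x \<in> carrier G" "y \<in> carrier G" for x y
      using character_mult[OF \<chi> that] by (intro eq_matI) (auto simp: \<rho>_def scalar_prod_def)
  qed
  have "mat_trace (\<rho> g) = \<chi> g" for g
    unfolding mat_trace_def \<rho>_def by simp
  then have "(\<lambda>g. if g \<in> carrier G then \<chi> g else 0) =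
      (\<lambda>g. if g \<in> carrier G then mat_trace (\<rho> g) else 0)"
    by (intro ext) simp
  with is_rep_dim_one_irreducible[OF rep] show ?thesis
    unfolding Irr_def by blast
qed

lemma grp_center_psubset:
  assumes "\<not> comm_group G"
  shows "grp_center G \<subset> carrier G"
proof -
  have "grp_center G \<noteq> carrier G"
  proof
    assume "grp_center G = carrier G"
    then have "comm_group G"
      by (intro group_comm_groupI) (auto simp: grp_center_def)
    then show False
      using assms by blast
  qed
  then show ?thesis
    unfolding grp_center_def by blast
qed

lemma linear_character_eq_1_on_K_grp:
  assumes fin: "finite (carrier G)" and nonabelian: "\<not> comm_group G"
    and \<chi>: "subgroup_character G (carrier G) \<chi>" and g: "g \<in> K_grp G"
  shows "\<chi> g = 1"
proof -
  let ?\<psi> = "\<lambda>x. if x \<in> carrier G then \<chi> x else 0"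
  have "?\<psi> \<in> Irr G"
    by (rule linear_character_in_Irr[OF \<chi>])
  moreover have "char_center G ?\<psi> = carrier G"
    unfolding char_center_def using character_norm_eq_1[OF fin \<chi>] by auto
  ultimately have "g \<in> char_ker G ?\<psi>"
    using g grp_center_psubset[OF nonabelian] unfolding K_grp_def by auto
  then show ?thesis
    using \<chi> by (auto simp: char_ker_def subgroup_character_def)
qed

lemma linear_character_separates_from_derived:
  assumes fin: "finite (carrier G)" and g: "g \<in> carrier G" "g \<notin> derived G (carrier G)"
  obtains \<chi> where "subgroup_character G (carrier G) \<chi>" "\<chi> g \<noteq> 1"
proof -
  let ?N = "derived G (carrier G)"
  interpret N: normal ?N G
    by (rule derived_self_is_normal)
  interpret Q: comm_group "G Mod ?N"
    by (rule derived_quot_is_comm_group)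
  have "?N #> g \<noteq> \<one>\<^bsub>G Mod ?N\<^esub>"
    using rcos_self[OF g(1) N.subgroup_axioms] g(2) by auto
  moreover have "finite (carrier (G Mod ?N))" "?N #> g \<in> carrier (G Mod ?N)"
    using fin g(1) by (simp_all add: carrier_FactGroup)
  ultimately obtain \<chi> where \<chi>: "subgroup_character (G Mod ?N) (carrier (G Mod ?N)) \<chi>" "\<chi> (?N #> g) \<noteq> 1"
    using Q.separating_character_exists by blast
  have "group_hom G (G Mod ?N) (\<lambda>x. ?N #> x)"
    by (simp add: group_hom_def group_hom_axioms_def is_group N.factorgroup_is_group N.r_coset_hom_Mod)
  then have "subgroup_character G (carrier G) (\<chi> \<circ> (\<lambda>x. ?N #> x))"
    using \<chi>(1) by (rule group_hom.character_comp)
  then show ?thesis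
    using that \<chi>(2) by simp
qed

end

theorem lemma2p1:
  fixes G :: "('a, 'b) monoid_scheme"
  assumes "group G" and "finite (carrier G)" and "\<not> comm_group G"
  shows "K_grp G \<subseteq> derived G (carrier G)"
proof
  interpret group G by fact
  fix g assume g: "g \<in> K_grp G"
  then have "g \<in> carrier G"
    by (simp add: K_grp_def)
  show "g \<in> derived G (carrier G)"
  proof (rule ccontr)
    assume "g \<notin> derived G (carrier G)"
    then obtain \<chi> where "subgroup_character G (carrier G) \<chi>" "\<chi> g \<noteq> 1"
      using linear_character_separates_from_derived assms(2) \<open>g \<in> carrier G\<close> by blast
    then show False
      using linear_character_eq_1_on_K_grp assms(2,3) g by blast
  qed
qed

end
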